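(* Let $r\in\mathbb{N}$ and let $0\le a_0<a_1<\dots<a_r\le 1$ be distinct interpolation nodes which are symmetrically distributed, i.e. $a_j=1-a_{r-j}$ for $j=0,\dots,r$. Let $\mathcal{L}\in\mathbb{R}$. For every real $\tau\neq 0$ let $\tilde p_r(\cdot,\tau)$ be the interpolation polynomial defined below. Then for every $s$ and every $\tau\neq 0$, $$\tilde p_r(s-\tau,-\tau)=\sum_{j=0}^r e^{-i a_j\tau\mathcal{L}}\,p_{j,r}(s-\tau,-\tau)=e^{-i\tau\mathcal{L}}\,\tilde p_r(s,\tau).$$
   Context: For real $\tau\neq 0$, let $p_{j,r}(\cdot,\tau)$, $j=0,\dots,r$, be the Lagrange basis polynomials (polynomials in the first variable of degree at most $r$) associated with the distinct points $a_0\tau,\dots,a_r\tau$, i.e. $p_{j,r}(a_m\tau,\tau)=\delta_{j,m}$. Define $\tilde p_r(s,\tau)=\sum_{j=0}^r e^{i a_j\tau\mathcal{L}}\,p_{j,r}(s,\tau)$, the unique polynomial in $s$ of degree at most $r$ with $\tilde p_r(a_j\tau,\tau)=e^{i a_j\tau\mathcal{L}}$ for $j=0,\dots,r$. (In the paper $\mathcal{L}$ is the lower-order part $\mathcal{L}_{\mathrm{low}}$ of a frequency polynomial, a real number for fixed frequencies.) *)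

theory Defs
  imports Complex_Main
begin

definition lagrange_basis :: "(nat \<Rightarrow> real) \<Rightarrow> nat \<Rightarrow> nat \<Rightarrow> real \<Rightarrow> real \<Rightarrow> real" where
  "lagrange_basis a r j s \<tau> =
     (\<Prod>m\<in>{0..r} - {j}. (s - a m * \<tau>) / (a j * \<tau> - a m * \<tau>))"

definition interp_exp :: "(nat \<Rightarrow> real) \<Rightarrow> nat \<Rightarrow> real \<Rightarrow> real \<Rightarrow> real \<Rightarrow> complex" where
  "interp_exp a r L s \<tau> =
     (\<Sum>j=0..r. exp (\<i> * complex_of_real (a j * \<tau> * L)) * complex_of_real (lagrange_basis a r j s \<tau>))"

end

theory Submission
  imports Defs
begin

text \<open>Under the reflection \<open>j \<mapsto> r - j\<close> the symmetric nodes satisfy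
  \<open>a\<^sub>j (-\<tau>) = a\<^bsub>r-j\<^esub> \<tau> - \<tau>\<close>, so shifting \<open>s\<close> by \<open>-\<tau>\<close> and reversing the sign of \<open>\<tau>\<close>
  merely permutes the interpolation nodes: each Lagrange basis polynomial is carried to
  its mirror image, while the exponential weights pick up the common factor
  \<open>e\<^bsup>-i\<tau>L\<^esup>\<close>. Ordering, range and distinctness of the nodes play no role; the
  identity even holds for the junk values that division by zero produces.\<close>

lemma lagrange_basis_reflect:
  assumes symm: "\<And>j. j \<le> r \<Longrightarrow> a j = 1 - a (r - j)" and j: "j \<le> r"
  shows "lagrange_basis a r j (s - \<tau>) (- \<tau>) = lagrange_basis a r (r - j) s \<tau>"
  unfolding lagrange_basis_def
proof (rule prod.reindex_bij_witness[where i="\<lambda>m. r - m" and j="\<lambda>m. r - m"])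
  fix m assume "m \<in> {0..r} - {j}"
  then have mirror_m: "a (r - m) = 1 - a m" using symm[of "r - m"] by simp
  show "(s - a (r - m) * \<tau>) / (a (r - j) * \<tau> - a (r - m) * \<tau>) =
      (s - \<tau> - a m * - \<tau>) / (a j * - \<tau> - a m * - \<tau>)"
    by (simp only: mirror_m symm[OF j]) (simp add: algebra_simps)
qed (use j in auto)

lemma interp_exp_uminus:
  "interp_exp a r L s (- \<tau>) =
     (\<Sum>j=0..r. exp (- \<i> * complex_of_real (a j * \<tau> * L)) * complex_of_real (lagrange_basis a r j s (- \<tau>)))"
  unfolding interp_exp_def by (simp add: algebra_simps)

lemma interp_exp_reflect:
  assumes symm: "\<And>j. j \<le> r \<Longrightarrow> a j = 1 - a (r - j)"
  shows "interp_exp a r L (s - \<tau>) (- \<tau>) = exp (- \<i> * complex_of_real (\<tau> * L)) * interp_exp a r L s \<tau>"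
proof -
  let ?term = "\<lambda>j. exp (\<i> * complex_of_real (a j * \<tau> * L)) * complex_of_real (lagrange_basis a r j s \<tau>)"
  have weight: "exp (- \<i> * complex_of_real (a j * \<tau> * L)) =
      exp (- \<i> * complex_of_real (\<tau> * L)) * exp (\<i> * complex_of_real (a (r - j) * \<tau> * L))"
    if "j \<le> r" for j
    by (simp add: symm[OF that] exp_add [symmetric] algebra_simps)
  have basis: "lagrange_basis a r j (s - \<tau>) (- \<tau>) = lagrange_basis a r (r - j) s \<tau>"
    if "j \<le> r" for j
    by (rule lagrange_basis_reflect) (fact symm, fact that)
  have "interp_exp a r L (s - \<tau>) (- \<tau>) =
      (\<Sum>j=0..r. exp (- \<i> * complex_of_real (\<tau> * L)) * ?term (r - j))"
    unfolding interp_exp_uminus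
  proof (rule sum.cong)
    fix j assume "j \<in> {0..r}"
    then have j: "j \<le> r" by simp
    show "exp (- \<i> * complex_of_real (a j * \<tau> * L)) * complex_of_real (lagrange_basis a r j (s - \<tau>) (- \<tau>)) =
        exp (- \<i> * complex_of_real (\<tau> * L)) * ?term (r - j)"
      unfolding weight[OF j] basis[OF j] by (rule mult.assoc)
  qed simp
  also have "\<dots> = exp (- \<i> * complex_of_real (\<tau> * L)) * (\<Sum>j=0..r. ?term (r - j))"
    by (simp add: sum_distrib_left)
  also have "(\<Sum>j=0..r. ?term (r - j)) = (\<Sum>j=0..r. ?term j)"
    using sum.atLeastAtMost_rev[of ?term 0 r] by simp
  finally show ?thesis
    unfolding interp_exp_def .
qed

theorem lemma4p2:
  fixes a :: "nat \<Rightarrow> real" and r :: nat and L s \<tau> :: real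
  assumes mono: "\<And>j k. j < k \<Longrightarrow> k \<le> r \<Longrightarrow> a j < a k"
    and lo: "0 \<le> a 0" and hi: "a r \<le> 1"
    and symm: "\<And>j. j \<le> r \<Longrightarrow> a j = 1 - a (r - j)"
    and tau: "\<tau> \<noteq> 0"
  shows "interp_exp a r L (s - \<tau>) (- \<tau>) =
           (\<Sum>j=0..r. exp (- \<i> * complex_of_real (a j * \<tau> * L)) * complex_of_real (lagrange_basis a r j (s - \<tau>) (- \<tau>)))
         \<and> (\<Sum>j=0..r. exp (- \<i> * complex_of_real (a j * \<tau> * L)) * complex_of_real (lagrange_basis a r j (s - \<tau>) (- \<tau>)))
           = exp (- \<i> * complex_of_real (\<tau> * L)) * interp_exp a r L s \<tau>"
proof
  show "interp_exp a r L (s - \<tau>) (- \<tau>) =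
      (\<Sum>j=0..r. exp (- \<i> * complex_of_real (a j * \<tau> * L)) * complex_of_real (lagrange_basis a r j (s - \<tau>) (- \<tau>)))"
    by (rule interp_exp_uminus)
  have "interp_exp a r L (s - \<tau>) (- \<tau>) = exp (- \<i> * complex_of_real (\<tau> * L)) * interp_exp a r L s \<tau>"
    by (rule interp_exp_reflect) (fact symm)
  with interp_exp_uminus[symmetric]
  show "(\<Sum>j=0..r. exp (- \<i> * complex_of_real (a j * \<tau> * L)) * complex_of_real (lagrange_basis a r j (s - \<tau>) (- \<tau>)))
      = exp (- \<i> * complex_of_real (\<tau> * L)) * interp_exp a r L s \<tau>"
    by (rule trans)
qed

end
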